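(* Let $(A,\boxdot,e)$ be a mosaic which is $\rho$-reversible for the endofunction $\rho:A\to A$. Then for every $x\in A$, $\rho(x)$ is the unique inverse of $x$ in $A$.
   Context: A multioperation on $A$ is a function $\boxdot:A\times A\to\wp(A)$. An element $e$ is neutral if $e\boxdot x=x\boxdot e=\{x\}$ for all $x\in A$. $(A,\boxdot)$ is $\rho$-reversible if for all $x,y,z\in A$, $z\in x\boxdot y$ implies both $x\in z\boxdot\rho(y)$ and $y\in\rho(x)\boxdot z$. A mosaic is a set with a multioperation having a neutral element and $\rho$-reversible for some endofunction $\rho$. An inverse of $x$ is an element $y\in A$ with $e\in(x\boxdot y)\cap(y\boxdot x)$. *)

theory Defs
  imports Main
begin

definition multiop :: "'a set \<Rightarrow> ('a \<Rightarrow> 'a \<Rightarrow> 'a set) \<Rightarrow> bool" where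
  "multiop A m \<longleftrightarrow> (\<forall>x\<in>A. \<forall>y\<in>A. m x y \<subseteq> A)"

definition neutral :: "'a set \<Rightarrow> ('a \<Rightarrow> 'a \<Rightarrow> 'a set) \<Rightarrow> 'a \<Rightarrow> bool" where
  "neutral A m e \<longleftrightarrow> e \<in> A \<and> (\<forall>x\<in>A. m e x = {x} \<and> m x e = {x})"

definition reversible :: "'a set \<Rightarrow> ('a \<Rightarrow> 'a \<Rightarrow> 'a set) \<Rightarrow> ('a \<Rightarrow> 'a) \<Rightarrow> bool" where
  "reversible A m \<rho> \<longleftrightarrow> (\<forall>x\<in>A. \<rho> x \<in> A) \<and>
     (\<forall>x\<in>A. \<forall>y\<in>A. \<forall>z\<in>A. z \<in> m x y \<longrightarrow> x \<in> m z (\<rho> y) \<and> y \<in> m (\<rho> x) z)"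

definition mosaic :: "'a set \<Rightarrow> ('a \<Rightarrow> 'a \<Rightarrow> 'a set) \<Rightarrow> 'a \<Rightarrow> ('a \<Rightarrow> 'a) \<Rightarrow> bool" where
  "mosaic A m e \<rho> \<longleftrightarrow> multiop A m \<and> neutral A m e \<and> reversible A m \<rho>"

definition is_inverse :: "'a set \<Rightarrow> ('a \<Rightarrow> 'a \<Rightarrow> 'a set) \<Rightarrow> 'a \<Rightarrow> 'a \<Rightarrow> 'a \<Rightarrow> bool" where
  "is_inverse A m e x y \<longleftrightarrow> y \<in> A \<and> e \<in> m x y \<inter> m y x"

end

theory Submission
  imports Defs
begin

text \<open>Reversing \<open>x \<in> e \<boxdot> x\<close> and \<open>x \<in> x \<boxdot> e\<close> yields \<open>e \<in> x \<boxdot> \<rho>(x)\<close> and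
  \<open>e \<in> \<rho>(x) \<boxdot> x\<close>. Conversely, reversing \<open>e \<in> x \<boxdot> y\<close> yields
  \<open>y \<in> \<rho>(x) \<boxdot> e = {\<rho>(x)}\<close>, so already every right inverse of \<open>x\<close> is \<open>\<rho>(x)\<close>.\<close>

lemma reversibleD:
  assumes "reversible A m \<rho>" "x \<in> A" "y \<in> A" "z \<in> A" "z \<in> m x y"
  shows "x \<in> m z (\<rho> y)" and "y \<in> m (\<rho> x) z"
  using assms unfolding reversible_def by blast+

lemma reversible_closed:
  assumes "reversible A m \<rho>" "x \<in> A"
  shows "\<rho> x \<in> A"
  using assms unfolding reversible_def by blast

lemma neutral_in_carrier: "neutral A m e \<Longrightarrow> e \<in> A"
  unfolding neutral_def by blast

lemma neutralD:
  assumes "neutral A m e" "x \<in> A"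
  shows "m e x = {x}" and "m x e = {x}"
  using assms unfolding neutral_def by blast+

lemma reversible_rho_right_inverse:
  assumes "neutral A m e" "reversible A m \<rho>" "x \<in> A"
  shows "e \<in> m x (\<rho> x)"
proof -
  have "x \<in> m e x" using neutralD(1)[OF assms(1,3)] by simp
  with assms show ?thesis by (blast intro: reversibleD(1) neutral_in_carrier)
qed

lemma reversible_rho_left_inverse:
  assumes "neutral A m e" "reversible A m \<rho>" "x \<in> A"
  shows "e \<in> m (\<rho> x) x"
proof -
  have "x \<in> m x e" using neutralD(2)[OF assms(1,3)] by simp
  with assms show ?thesis by (blast intro: reversibleD(2) neutral_in_carrier)
qed

lemma reversible_right_inverse_unique:
  assumes "neutral A m e" "reversible A m \<rho>" "x \<in> A" "y \<in> A" "e \<in> m x y"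
  shows "y = \<rho> x"
proof -
  have "y \<in> m (\<rho> x) e"
    using reversibleD(2)[OF assms(2,3,4) neutral_in_carrier[OF assms(1)] assms(5)] .
  then show ?thesis
    using neutralD(2)[OF assms(1) reversible_closed[OF assms(2,3)]] by simp
qed

theorem mainTheorem20:
  fixes A :: "'a set" and m :: "'a \<Rightarrow> 'a \<Rightarrow> 'a set" and e :: 'a and \<rho> :: "'a \<Rightarrow> 'a"
  assumes "mosaic A m e \<rho>"
  shows "\<forall>x\<in>A. is_inverse A m e x (\<rho> x) \<and> (\<forall>y. is_inverse A m e x y \<longrightarrow> y = \<rho> x)"
proof (intro ballI conjI allI impI)
  fix x assume x: "x \<in> A"
  have neutral: "neutral A m e" and reversible: "reversible A m \<rho>"
    using assms unfolding mosaic_def by simp_all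
  show "is_inverse A m e x (\<rho> x)"
    unfolding is_inverse_def
    using reversible_closed[OF reversible x] reversible_rho_right_inverse[OF neutral reversible x]
      reversible_rho_left_inverse[OF neutral reversible x] by simp
  fix y assume "is_inverse A m e x y"
  then show "y = \<rho> x"
    unfolding is_inverse_def
    using reversible_right_inverse_unique[OF neutral reversible x] by simp
qed

end
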